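(* Let $\alpha,\beta,\gamma>0$ and set $\Omega=[0,1]$. For $x\in(0,1)$ and $y\in[0,1]$ define $$f(x,y)=-\left(\frac{1}{x(1-x)}\right)^{\gamma}-\alpha\exp\bigl(-\beta(x-y)\bigr),$$ and for a Borel probability measure $\mu$ on $[0,1]$ define the payoff $\varphi(x;\mu)=\int_{[0,1]} f(x,y)\,\mu(dy)$ for $x\in(0,1)$, with $\varphi(0;\mu)=\varphi(1;\mu)=-\infty$. Then the equation $$\frac{d}{dx}\left(\frac{1}{x(1-x)}\right)^{\gamma}=\alpha\beta$$ has a unique solution $x=\hat{x}\in(0,1)$. Moreover, the Dirac measure $\delta_{\{x=\hat x\}}$ is a pure Nash equilibrium of the game with payoff $\varphi$, i.e. $\hat x\in\arg\max_{x\in[0,1]}\varphi(x;\delta_{\{x=\hat x\}})$, and it is the only pure Nash equilibrium: if $z\in[0,1]$ satisfies $z\in\arg\max_{x\in[0,1]}\varphi(x;\delta_{\{x=z\}})$, then $z=\hat x$.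
   Context: This is a population game on the action space $\Omega=[0,1]$: a distribution of actions of agents is a Borel probability measure $\mu$ on $\Omega$, and an agent choosing action $x$ receives payoff $\varphi(x;\mu)$. A pure Nash equilibrium is a Dirac measure $\delta_{\{x=z\}}$ concentrated at a point $z\in\Omega$ such that $z$ maximizes $x\mapsto\varphi(x;\delta_{\{x=z\}})$ over $\Omega$. *)

theory Defs
  imports "HOL-Probability.Probability"
begin

definition Omega :: "real measure" where
  "Omega = restrict_space borel {0..1}"

definition f_pay :: "real \<Rightarrow> real \<Rightarrow> real \<Rightarrow> real \<Rightarrow> real \<Rightarrow> real" where
  "f_pay \<alpha> \<beta> \<gamma> x y = - ((1 / (x * (1 - x))) powr \<gamma>) - \<alpha> * exp (- \<beta> * (x - y))"

definition phi :: "real \<Rightarrow> real \<Rightarrow> real \<Rightarrow> real \<Rightarrow> real measure \<Rightarrow> ereal" where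
  "phi \<alpha> \<beta> \<gamma> x \<mu> = (if 0 < x \<and> x < 1 then ereal (\<integral>y. f_pay \<alpha> \<beta> \<gamma> x y \<partial>\<mu>) else - \<infinity>)"

definition pure_NE :: "(real \<Rightarrow> real measure \<Rightarrow> ereal) \<Rightarrow> real \<Rightarrow> bool" where
  "pure_NE \<phi> z \<longleftrightarrow> z \<in> {0..1} \<and>
     (\<forall>x\<in>{0..1}. \<phi> x (return Omega z) \<le> \<phi> z (return Omega z))"

end

theory Submission
  imports Defs
begin

text \<open>Write \<open>G(x) = (1 / (x (1 - x)))\<^sup>\<gamma>\<close>. Against the Dirac measure at \<open>z\<close> the payoff is
  \<open>x \<mapsto> f(x, z)\<close>, and \<open>\<partial>\<^sub>x f(x, z) = \<alpha>\<beta> exp(\<beta>(z - x)) - G'(x)\<close>. Since \<open>G'\<close> increases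
  strictly from \<open>-\<infinity>\<close> to \<open>+\<infinity>\<close> on \<open>(0, 1)\<close>, the equation \<open>G'(x) = \<alpha>\<beta>\<close> has a unique root.
  An interior maximiser \<open>z\<close> of \<open>f(\<cdot>, z)\<close> must satisfy the first-order condition \<open>G'(z) = \<alpha>\<beta>\<close>;
  conversely, if \<open>G'(z) = \<alpha>\<beta>\<close>, then \<open>\<partial>\<^sub>x f(x, z) \<ge> \<alpha>\<beta> - G'(x) > 0\<close> for \<open>x < z\<close> and
  \<open>\<partial>\<^sub>x f(x, z) \<le> \<alpha>\<beta> - G'(x) < 0\<close> for \<open>x > z\<close>, so \<open>z\<close> is the global maximiser. The boundary
  points, where the payoff is \<open>-\<infinity>\<close>, are never equilibria.\<close>

definition barrier :: "real \<Rightarrow> real \<Rightarrow> real" where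
  "barrier \<gamma> x = (1 / (x * (1 - x))) powr \<gamma>"

definition barrier_deriv :: "real \<Rightarrow> real \<Rightarrow> real" where
  "barrier_deriv \<gamma> x = \<gamma> * (2 * x - 1) * (x * (1 - x)) powr (- \<gamma> - 1)"

lemma barrier_eq_powr_neg: "0 < x \<Longrightarrow> x < 1 \<Longrightarrow> barrier \<gamma> x = (x * (1 - x)) powr (- \<gamma>)"
  by (simp add: barrier_def powr_minus_divide powr_divide)

lemma has_real_derivative_barrier:
  assumes "0 < x" "x < 1"
  shows "(barrier \<gamma> has_real_derivative barrier_deriv \<gamma> x) (at x)"
proof -
  have "((\<lambda>x. (x * (1 - x)) powr (- \<gamma>)) has_real_derivative barrier_deriv \<gamma> x) (at x)"
    using assms unfolding barrier_deriv_def
    by (auto intro!: derivative_eq_intros simp: algebra_simps)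
  then show ?thesis
    by (rule has_field_derivative_transform_within_open[where S = "{0<..<1}"])
       (use assms in \<open>auto simp: barrier_eq_powr_neg\<close>)
qed

lemma has_real_derivative_barrier_iff:
  "0 < x \<Longrightarrow> x < 1 \<Longrightarrow> (barrier \<gamma> has_real_derivative d) (at x) \<longleftrightarrow> d = barrier_deriv \<gamma> x"
  using has_real_derivative_barrier DERIV_unique by blast

lemma barrier_deriv_has_pos_derivative:
  assumes "0 < x" "x < 1" "\<gamma> > 0"
  shows "\<exists>y. DERIV (barrier_deriv \<gamma>) x :> y \<and> y > 0"
proof -
  let ?p = "x * (1 - x)"
  have p: "?p > 0" using assms by simp
  have "DERIV (barrier_deriv \<gamma>) x :>
      \<gamma> * (2 * ?p powr (- \<gamma> - 1) + (\<gamma> + 1) * (2 * x - 1)\<^sup>2 * ?p powr (- \<gamma> - 2))"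
    unfolding barrier_deriv_def using p
    by (auto intro!: derivative_eq_intros simp: algebra_simps power2_eq_square)
  moreover have "\<gamma> * (2 * ?p powr (- \<gamma> - 1) + (\<gamma> + 1) * (2 * x - 1)\<^sup>2 * ?p powr (- \<gamma> - 2)) > 0"
    using p assms by (intro mult_pos_pos add_pos_nonneg) auto
  ultimately show ?thesis by blast
qed

lemma continuous_on_barrier_deriv: "\<gamma> > 0 \<Longrightarrow> continuous_on {0<..<1} (barrier_deriv \<gamma>)"
  by (intro continuous_at_imp_continuous_on ballI)
     (metis DERIV_isCont barrier_deriv_has_pos_derivative greaterThanLessThan_iff)

lemma strict_mono_on_barrier_deriv:
  assumes "\<gamma> > 0"
  shows "strict_mono_on {0<..<1} (barrier_deriv \<gamma>)"
proof (rule strict_mono_onI)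
  fix x y :: real assume "x \<in> {0<..<1}" "y \<in> {0<..<1}" "x < y"
  then show "barrier_deriv \<gamma> x < barrier_deriv \<gamma> y"
    using assms
    by (intro DERIV_pos_imp_increasing_open[OF \<open>x < y\<close>] barrier_deriv_has_pos_derivative
          continuous_on_subset[OF continuous_on_barrier_deriv]) auto
qed

lemma barrier_deriv_half [simp]: "barrier_deriv \<gamma> (1/2) = 0"
  by (simp add: barrier_deriv_def)

lemma barrier_deriv_unbounded:
  assumes "\<gamma> > 0" "c > 0"
  shows "\<exists>x. 1/2 \<le> x \<and> x < 1 \<and> c \<le> barrier_deriv \<gamma> x"
proof -
  define t where "t = min (1/4) (\<gamma> / (4 * c))"
  have t: "0 < t" "t \<le> 1/4" "4 * c * t \<le> \<gamma>"
    using assms by (auto simp: t_def min_def field_simps)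
  define p where "p = (1 - t) * t"
  have p: "0 < p" "p \<le> t"
    using t by (auto simp: p_def mult_le_cancel_right1)
  then have "p \<le> 1"
    using t by linarith
  have "c \<le> \<gamma> / (4 * t)"
    using t by (simp add: field_simps)
  also have "\<dots> \<le> \<gamma> / (2 * t)"
    using t assms(1) by (simp add: frac_le)
  also have "\<dots> = (\<gamma> / 2) * (1 / t)"
    by simp
  also have "\<dots> \<le> \<gamma> * (1 - 2 * t) * (1 / p)"
    using t p assms(1) by (intro mult_mono frac_le) auto
  also have "1 / p = p powr (- 1)"
    using p by (simp add: powr_minus_divide)
  also have "\<gamma> * (1 - 2 * t) * p powr (- 1) \<le> \<gamma> * (1 - 2 * t) * p powr (- \<gamma> - 1)"
    using t p \<open>p \<le> 1\<close> assms(1) by (intro mult_left_mono powr_mono') auto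
  also have "\<dots> = barrier_deriv \<gamma> (1 - t)"
    by (simp add: barrier_deriv_def p_def algebra_simps)
  finally show ?thesis
    using t by (intro exI[of _ "1 - t"]) auto
qed

lemma ex1_barrier_deriv_eq:
  assumes "\<gamma> > 0" "c > 0"
  shows "\<exists>!x. x \<in> {0<..<1} \<and> barrier_deriv \<gamma> x = c"
proof (rule ex_ex1I)
  obtain b where b: "1/2 \<le> b" "b < 1" "c \<le> barrier_deriv \<gamma> b"
    using barrier_deriv_unbounded assms by blast
  have "continuous_on {1/2..b} (barrier_deriv \<gamma>)"
    using b by (intro continuous_on_subset[OF continuous_on_barrier_deriv[OF assms(1)]]) auto
  then obtain x where "1/2 \<le> x" "x \<le> b" "barrier_deriv \<gamma> x = c"
    using IVT'[of "barrier_deriv \<gamma>" "1/2" c b] b assms(2) by auto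
  with b show "\<exists>x. x \<in> {0<..<1} \<and> barrier_deriv \<gamma> x = c"
    by (intro exI[of _ x]) auto
next
  fix x y
  assume "x \<in> {0<..<1} \<and> barrier_deriv \<gamma> x = c" "y \<in> {0<..<1} \<and> barrier_deriv \<gamma> y = c"
  then show "x = y"
    using strict_mono_on_imp_inj_on[OF strict_mono_on_barrier_deriv[OF assms(1)]]
    by (auto dest: inj_onD)
qed

lemma has_real_derivative_f_pay:
  assumes "0 < x" "x < 1"
  shows "((\<lambda>x. f_pay \<alpha> \<beta> \<gamma> x c) has_real_derivative
           \<alpha> * \<beta> * exp (- \<beta> * (x - c)) - barrier_deriv \<gamma> x) (at x)"
proof -
  have "(\<lambda>x. f_pay \<alpha> \<beta> \<gamma> x c) = (\<lambda>x. - barrier \<gamma> x - \<alpha> * exp (- \<beta> * (x - c)))"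
    by (simp add: fun_eq_iff f_pay_def barrier_def)
  then show ?thesis
    by (auto intro!: derivative_eq_intros has_real_derivative_barrier[OF assms])
qed

lemma continuous_on_f_pay:
  "{a..b} \<subseteq> {0<..<1} \<Longrightarrow> continuous_on {a..b} (\<lambda>x. f_pay \<alpha> \<beta> \<gamma> x c)"
  by (rule DERIV_continuous_on, rule has_field_derivative_at_within, rule has_real_derivative_f_pay) auto

lemma f_pay_best_response_iff:
  assumes "\<alpha> \<ge> 0" "\<beta> \<ge> 0" "\<gamma> > 0" "c \<in> {0<..<1}"
  shows "(\<forall>x\<in>{0<..<1}. f_pay \<alpha> \<beta> \<gamma> x c \<le> f_pay \<alpha> \<beta> \<gamma> c c) \<longleftrightarrow> barrier_deriv \<gamma> c = \<alpha> * \<beta>"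
proof
  assume max: "\<forall>x\<in>{0<..<1}. f_pay \<alpha> \<beta> \<gamma> x c \<le> f_pay \<alpha> \<beta> \<gamma> c c"
  have "\<alpha> * \<beta> * exp (- \<beta> * (c - c)) - barrier_deriv \<gamma> c = 0"
  proof (rule DERIV_local_max[OF has_real_derivative_f_pay])
    show "\<forall>y. \<bar>c - y\<bar> < min c (1 - c) \<longrightarrow> f_pay \<alpha> \<beta> \<gamma> y c \<le> f_pay \<alpha> \<beta> \<gamma> c c"
      using max by (auto simp: abs_if split: if_splits)
  qed (use assms in auto)
  then show "barrier_deriv \<gamma> c = \<alpha> * \<beta>" by simp
next
  assume root: "barrier_deriv \<gamma> c = \<alpha> * \<beta>"
  have mono: "barrier_deriv \<gamma> x < barrier_deriv \<gamma> y" if "x \<in> {0<..<1}" "y \<in> {0<..<1}" "x < y" for x y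
    using strict_mono_onD[OF strict_mono_on_barrier_deriv[OF assms(3)]] that by blast
  show "\<forall>x\<in>{0<..<1}. f_pay \<alpha> \<beta> \<gamma> x c \<le> f_pay \<alpha> \<beta> \<gamma> c c"
  proof
    fix x :: real assume x: "x \<in> {0<..<1}"
    consider "x \<le> c" | "c \<le> x" by linarith
    then show "f_pay \<alpha> \<beta> \<gamma> x c \<le> f_pay \<alpha> \<beta> \<gamma> c c"
    proof cases
      case 1
      show ?thesis
      proof (rule DERIV_nonneg_imp_increasing_open[OF 1 _ continuous_on_f_pay])
        fix y assume y: "x < y" "y < c"
        have "barrier_deriv \<gamma> y \<le> \<alpha> * \<beta>" using mono[of y c] root x y assms(4) by auto
        also have "\<dots> \<le> \<alpha> * \<beta> * exp (- \<beta> * (y - c))"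
          using assms y by (simp add: mult_le_cancel_left1 mult_nonneg_nonpos mult_less_0_iff)
        finally show "\<exists>d. ((\<lambda>x. f_pay \<alpha> \<beta> \<gamma> x c) has_real_derivative d) (at y) \<and> d \<ge> 0"
          using has_real_derivative_f_pay[of y] x y assms(4) by force
      qed (use x assms in auto)
    next
      case 2
      show ?thesis
      proof (rule DERIV_nonpos_imp_decreasing_open[OF 2 _ continuous_on_f_pay])
        fix y assume y: "c < y" "y < x"
        have "\<alpha> * \<beta> * exp (- \<beta> * (y - c)) \<le> \<alpha> * \<beta>"
          using assms y by (intro mult_right_le_one_le) (auto simp: mult_nonneg_nonneg)
        also have "\<dots> \<le> barrier_deriv \<gamma> y" using mono[of c y] root x y assms(4) by auto
        finally show "\<exists>d. ((\<lambda>x. f_pay \<alpha> \<beta> \<gamma> x c) has_real_derivative d) (at y) \<and> d \<le> 0"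
          using has_real_derivative_f_pay[of y] x y assms(4) by force
      qed (use x assms in auto)
    qed
  qed
qed

lemma phi_return:
  assumes "z \<in> {0..1}"
  shows "phi \<alpha> \<beta> \<gamma> x (return Omega z) =
           (if 0 < x \<and> x < 1 then ereal (f_pay \<alpha> \<beta> \<gamma> x z) else - \<infinity>)"
proof -
  have "f_pay \<alpha> \<beta> \<gamma> x \<in> borel_measurable Omega"
    unfolding f_pay_def Omega_def by (intro measurable_restrict_space1) measurable
  moreover have "space Omega = {0..1}"
    by (simp add: Omega_def space_restrict_space)
  ultimately show ?thesis
    using assms by (simp add: phi_def integral_return)
qed

lemma pure_NE_phi_iff:
  "pure_NE (phi \<alpha> \<beta> \<gamma>) z \<longleftrightarrow>
     z \<in> {0<..<1} \<and> (\<forall>x\<in>{0<..<1}. f_pay \<alpha> \<beta> \<gamma> x z \<le> f_pay \<alpha> \<beta> \<gamma> z z)"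
proof
  assume "pure_NE (phi \<alpha> \<beta> \<gamma>) z"
  then have z: "z \<in> {0..1}"
    and le: "\<And>x. x \<in> {0..1} \<Longrightarrow> phi \<alpha> \<beta> \<gamma> x (return Omega z) \<le> phi \<alpha> \<beta> \<gamma> z (return Omega z)"
    by (auto simp: pure_NE_def)
  have "z \<in> {0<..<1}"
    using le[of "1/2"] z by (auto simp: phi_return split: if_splits)
  moreover have "f_pay \<alpha> \<beta> \<gamma> x z \<le> f_pay \<alpha> \<beta> \<gamma> z z" if "x \<in> {0<..<1}" for x
    using le[of x] that \<open>z \<in> {0<..<1}\<close> z by (simp add: phi_return)
  ultimately show "z \<in> {0<..<1} \<and> (\<forall>x\<in>{0<..<1}. f_pay \<alpha> \<beta> \<gamma> x z \<le> f_pay \<alpha> \<beta> \<gamma> z z)"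
    by blast
next
  assume "z \<in> {0<..<1} \<and> (\<forall>x\<in>{0<..<1}. f_pay \<alpha> \<beta> \<gamma> x z \<le> f_pay \<alpha> \<beta> \<gamma> z z)"
  then show "pure_NE (phi \<alpha> \<beta> \<gamma>) z"
    by (auto simp: pure_NE_def phi_return)
qed

theorem mainTheorem1:
  fixes \<alpha> \<beta> \<gamma> :: real
  assumes "\<alpha> > 0" and "\<beta> > 0" and "\<gamma> > 0"
  shows "\<exists>xh. xh \<in> {0<..<1}
     \<and> ((\<lambda>x. (1 / (x * (1 - x))) powr \<gamma>) has_real_derivative (\<alpha> * \<beta>)) (at xh)
     \<and> (\<forall>x\<in>{0<..<1}. ((\<lambda>x. (1 / (x * (1 - x))) powr \<gamma>) has_real_derivative (\<alpha> * \<beta>)) (at x) \<longrightarrow> x = xh)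
     \<and> pure_NE (phi \<alpha> \<beta> \<gamma>) xh
     \<and> (\<forall>z. pure_NE (phi \<alpha> \<beta> \<gamma>) z \<longrightarrow> z = xh)"
proof -
  have barrier_lambda: "(\<lambda>x. (1 / (x * (1 - x))) powr \<gamma>) = barrier \<gamma>"
    by (simp add: fun_eq_iff barrier_def)
  obtain xh where xh: "xh \<in> {0<..<1}" "barrier_deriv \<gamma> xh = \<alpha> * \<beta>"
    and unique: "\<And>x. x \<in> {0<..<1} \<Longrightarrow> barrier_deriv \<gamma> x = \<alpha> * \<beta> \<Longrightarrow> x = xh"
    using ex1_barrier_deriv_eq[of \<gamma> "\<alpha> * \<beta>"] assms by auto
  have NE_iff: "pure_NE (phi \<alpha> \<beta> \<gamma>) z \<longleftrightarrow> z \<in> {0<..<1} \<and> barrier_deriv \<gamma> z = \<alpha> * \<beta>" for z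
    using pure_NE_phi_iff[of \<alpha> \<beta> \<gamma> z] f_pay_best_response_iff[of \<alpha> \<beta> \<gamma> z] assms by auto
  have deriv_iff: "(barrier \<gamma> has_real_derivative \<alpha> * \<beta>) (at x) \<longleftrightarrow> barrier_deriv \<gamma> x = \<alpha> * \<beta>"
    if "x \<in> {0<..<1}" for x
    using has_real_derivative_barrier_iff[of x \<gamma> "\<alpha> * \<beta>"] that by auto
  show ?thesis
    unfolding barrier_lambda NE_iff
    using xh unique deriv_iff by blast
qed

end
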